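(* Letting \begin{align*} \mathsf{D} & = \gamma_2 \mathsf{C_2^T W^{-1}}\bigl(\mathsf{I}_\ell-\bigl(\mathsf{I}_\ell+\gamma_1 \mathsf{C A^{-1} C^T W^{-1}}\bigr)^{-1}\bigr), \\ \mathsf{E} & = \mathsf{C_2 A_{22}^{-1}}, \\ \mathsf{G} & = \mathsf{I}_\ell - \gamma_1 \mathsf{C_2 A_{22}^{-1} C_2^T W^{-1}}, \\ \mathsf{F} & = \bigl(\mathsf{I}_\ell + \gamma_1 \mathsf{C A^{-1} C^T W^{-1}}\bigr)^{-1}, \end{align*} the right-preconditioned matrix can be written as: \begin{equation*} \mathcal{A}_{\gamma_1,\gamma_2} \widetilde{\mathcal{P}}_{\gamma_1,\gamma_2}^{-1} = \begin{bmatrix} \mathsf{I}_n & 0 & 0 \\ \mathsf{A_{21} A_{11}^{-1}} & \mathsf{I}_m-\mathsf{DE} & \mathsf{DG}\left(\frac{1}{\gamma_1}\mathsf{W}\right)\hat{\mathsf{S}}^{-1} \\ \mathsf{C A_{11}^{-1}} & -\mathsf{FE} & \left(\mathsf{I}_\ell-\mathsf{FG}\right) \left(-\frac{1}{\gamma_1}\mathsf{W}\right)\hat{\mathsf{S}}^{-1} \end{bmatrix}. \end{equation*}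
   Context: Let $\mathsf{A}\in\mathbb{R}^{n\times n}$ be symmetric positive definite, $\mathsf{A_2}\in\mathbb{R}^{m\times m}$ symmetric positive semidefinite with $\ker(\mathsf{A_2})=\operatorname{span}\{\mathsf{1}\}$, $\mathsf{C}\in\mathbb{R}^{\ell\times n}$ of full row rank, $\mathsf{C_2}\in\mathbb{R}^{\ell\times m}$ with $\mathsf{1}\notin\ker(\mathsf{C_2})$, $\mathsf{W}\in\mathbb{R}^{\ell\times\ell}$ symmetric positive definite, $\gamma_1,\gamma_2>0$, and $\hat{\mathsf{S}}\in\mathbb{R}^{\ell\times\ell}$ invertible. Define $\mathsf{A_{11}}=\mathsf{A}+\gamma_1\mathsf{C^TW^{-1}C}$, $\mathsf{A_{12}}=-\gamma_1\mathsf{C^TW^{-1}C_2}$, $\mathsf{A_{21}}=-\gamma_2\mathsf{C_2^TW^{-1}C}$, $\mathsf{A_{22}}=\mathsf{A_2}+\gamma_2\mathsf{C_2^TW^{-1}C_2}$ (so $\mathsf{A_{11}}$ and $\mathsf{A_{22}}$ are invertible), the augmented matrix $\mathcal{A}_{\gamma_1,\gamma_2}=\begin{bmatrix}\mathsf{A_{11}}&\mathsf{A_{12}}&\mathsf{C^T}\\ \mathsf{A_{21}}&\mathsf{A_{22}}&-\mathsf{C_2^T}\\ \mathsf{C}&-\mathsf{C_2}&0\end{bmatrix}$ and the modified augmented Lagrangian preconditioner $\widetilde{\mathcal{P}}_{\gamma_1,\gamma_2}=\begin{bmatrix}\mathsf{A_{11}}&\mathsf{A_{12}}&\mathsf{C^T}\\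 0&\mathsf{A_{22}}&-\mathsf{C_2^T}\\ 0&0&\hat{\mathsf{S}}\end{bmatrix}$. *)

theory Defs
  imports "HOL-Analysis.Analysis"
begin

definition sym_pos_def :: "real^'n^'n \<Rightarrow> bool" where
  "sym_pos_def M \<longleftrightarrow> transpose M = M \<and> (\<forall>x. x \<noteq> 0 \<longrightarrow> x \<bullet> (M *v x) > 0)"

definition sym_pos_semidef :: "real^'n^'n \<Rightarrow> bool" where
  "sym_pos_semidef M \<longleftrightarrow> transpose M = M \<and> (\<forall>x. x \<bullet> (M *v x) \<ge> 0)"

definition mat_ker :: "real^'c^'r \<Rightarrow> (real^'c) set" where
  "mat_ker M = {x. M *v x = 0}"

definition block3 ::
  "real^'c1^'r1 \<Rightarrow> real^'c2^'r1 \<Rightarrow> real^'c3^'r1 \<Rightarrow>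
   real^'c1^'r2 \<Rightarrow> real^'c2^'r2 \<Rightarrow> real^'c3^'r2 \<Rightarrow>
   real^'c1^'r3 \<Rightarrow> real^'c2^'r3 \<Rightarrow> real^'c3^'r3 \<Rightarrow>
   real^(('c1 + 'c2) + 'c3)^(('r1 + 'r2) + 'r3)" where
  "block3 M11 M12 M13 M21 M22 M23 M31 M32 M33 =
    (\<chi> i j. (case i of
        Inl (Inl a) \<Rightarrow> (case j of Inl (Inl b) \<Rightarrow> M11$a$b | Inl (Inr b) \<Rightarrow> M12$a$b | Inr b \<Rightarrow> M13$a$b)
      | Inl (Inr a) \<Rightarrow> (case j of Inl (Inl b) \<Rightarrow> M21$a$b | Inl (Inr b) \<Rightarrow> M22$a$b | Inr b \<Rightarrow> M23$a$b)
      | Inr a \<Rightarrow> (case j of Inl (Inl b) \<Rightarrow> M31$a$b | Inl (Inr b) \<Rightarrow> M32$a$b | Inr b \<Rightarrow> M33$a$b)))"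

end

theory Submission
  imports Defs
begin

text \<open>
  The preconditioner is block upper triangular with invertible diagonal blocks \<open>A11\<close>,
  \<open>A22\<close>, \<open>Shat\<close>, so it suffices to check blockwise that the claimed right-hand side times
  the preconditioner is the augmented matrix. Once \<open>A12\<close>, \<open>A21\<close>, \<open>D\<close>, \<open>E\<close>, \<open>G\<close> are expanded, all nine block identities
  reduce to the push-through (Woodbury) identity
  \<open>\<gamma>1 C A11\<^sup>-\<^sup>1 C\<^sup>T W\<^sup>-\<^sup>1 = I - F\<close>.
  The inverses involved exist because \<open>A11\<close>, \<open>A22\<close> and \<open>(I + \<gamma>1 C A\<^sup>-\<^sup>1 C\<^sup>T W\<^sup>-\<^sup>1) W\<close>
  all have the shape \<open>M + \<gamma> B\<^sup>T Q B\<close> with \<open>M\<close> positive semidefinite, \<open>Q\<close> positive definite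
  and \<open>ker M \<inter> ker B = 0\<close>; for \<open>A22\<close> this is where \<open>ker A2 = span {1}\<close> and \<open>C2 1 \<noteq> 0\<close> enter.
\<close>

lemma sum_UNIV_Plus:
  "sum f (UNIV :: ('a::finite + 'b::finite) set) = sum (f \<circ> Inl) UNIV + sum (f \<circ> Inr) UNIV"
  by (subst UNIV_Plus_UNIV[symmetric], rule sum.Plus) auto

lemma block3_mult:
  "block3 X11 X12 X13 X21 X22 X23 X31 X32 X33 ** block3 Y11 Y12 Y13 Y21 Y22 Y23 Y31 Y32 Y33 =
   block3
     (X11 ** Y11 + X12 ** Y21 + X13 ** Y31) (X11 ** Y12 + X12 ** Y22 + X13 ** Y32)
     (X11 ** Y13 + X12 ** Y23 + X13 ** Y33)
     (X21 ** Y11 + X22 ** Y21 + X23 ** Y31) (X21 ** Y12 + X22 ** Y22 + X23 ** Y32)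
     (X21 ** Y13 + X22 ** Y23 + X23 ** Y33)
     (X31 ** Y11 + X32 ** Y21 + X33 ** Y31) (X31 ** Y12 + X32 ** Y22 + X33 ** Y32)
     (X31 ** Y13 + X32 ** Y23 + X33 ** Y33)"
  unfolding vec_eq_iff
  by (auto simp: matrix_matrix_mult_def block3_def sum_UNIV_Plus split: sum.splits)

lemma mat_1_block3:
  "(mat 1 :: real^(('a::finite + 'b::finite) + 'c::finite)^(('a + 'b) + 'c)) =
   block3 (mat 1) 0 0 0 (mat 1) 0 0 0 (mat 1)"
  unfolding vec_eq_iff by (auto simp: mat_def block3_def split: sum.splits)

lemma matrix_add_rdistrib: "(A + B) ** C = A ** C + B ** C"
  by (vector matrix_matrix_mult_def sum.distrib distrib_right)

lemma matrix_diff_ldistrib: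
  fixes A :: "'a::ring_1^'n^'m"
  shows "A ** (B - C) = A ** B - A ** C"
  by (vector matrix_matrix_mult_def sum_subtractf right_diff_distrib)

lemma matrix_diff_rdistrib:
  fixes A :: "'a::ring_1^'n^'m"
  shows "(A - B) ** C = A ** C - B ** C"
  by (vector matrix_matrix_mult_def sum_subtractf left_diff_distrib)

lemma matrix_uminus_left:
  fixes A :: "'a::ring_1^'n^'m"
  shows "(- A) ** B = - (A ** B)"
  by (vector matrix_matrix_mult_def sum_negf)

lemma matrix_uminus_right:
  fixes A :: "'a::ring_1^'n^'m"
  shows "A ** (- B) = - (A ** B)"
  by (vector matrix_matrix_mult_def sum_negf)

lemma matrix_scaleR_right:
  fixes A :: "real^'n^'m"
  shows "A ** (k *\<^sub>R B) = k *\<^sub>R (A ** B)"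
  by (simp add: matrix_scalar_ac scalar_matrix_assoc)

lemmas matrix_ring_simps =
  matrix_add_ldistrib matrix_add_rdistrib matrix_diff_ldistrib matrix_diff_rdistrib
  matrix_uminus_left matrix_uminus_right scalar_matrix_assoc[symmetric] matrix_scaleR_right
  matrix_mul_assoc[symmetric]

lemma
  fixes M :: "'a::field^'n^'n"
  assumes "invertible M"
  shows matrix_inv_right: "M ** matrix_inv M = mat 1"
    and matrix_inv_left: "matrix_inv M ** M = mat 1"
  using someI_ex[OF assms[unfolded invertible_def]] unfolding matrix_inv_def by auto

lemma
  fixes M :: "'a::field^'n^'n"
  assumes "invertible M"
  shows matrix_inv_right_cancel: "M ** (matrix_inv M ** X) = X"
    and matrix_inv_left_cancel: "matrix_inv M ** (M ** X) = X"
  by (simp_all add: matrix_mul_assoc matrix_inv_right matrix_inv_left assms)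

lemmas matrix_inv_simps =
  matrix_inv_right matrix_inv_left matrix_inv_right_cancel matrix_inv_left_cancel

lemma matrix_inv_eqI:
  fixes M :: "'a::field^'n^'n"
  assumes "X ** M = Y" and "invertible M"
  shows "Y ** matrix_inv M = X"
  using assms by (metis matrix_inv_right matrix_mul_assoc matrix_mul_rid)

lemma block3_upper_triangular_invertible:
  fixes X11 :: "real^'a^'a" and X22 :: "real^'b^'b" and X33 :: "real^'c^'c"
  assumes "invertible X11" "invertible X22" "invertible X33"
  shows "invertible (block3 X11 X12 X13 0 X22 X23 0 0 X33)"
proof -
  let ?Y = "block3 (matrix_inv X11) (- (matrix_inv X11 ** X12 ** matrix_inv X22))
      (matrix_inv X11 ** (X12 ** matrix_inv X22 ** X23 - X13) ** matrix_inv X33)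
    0 (matrix_inv X22) (- (matrix_inv X22 ** X23 ** matrix_inv X33))
    0 0 (matrix_inv X33)"
  have "block3 X11 X12 X13 0 X22 X23 0 0 X33 ** ?Y = mat 1"
    unfolding block3_mult mat_1_block3
    by (simp add: matrix_ring_simps matrix_inv_simps assms)
  then show ?thesis
    using invertible_right_inverse by blast
qed

lemma sym_pos_def_imp_semidef: "sym_pos_def M \<Longrightarrow> sym_pos_semidef M"
  unfolding sym_pos_def_def sym_pos_semidef_def by (metis inner_zero_left order.refl less_imp_le)

lemma mat_ker_sym_pos_def: "sym_pos_def M \<Longrightarrow> mat_ker M = {0}"
  unfolding sym_pos_def_def mat_ker_def by force

lemma invertible_iff_mat_ker:
  fixes M :: "real^'n^'n"
  shows "invertible M \<longleftrightarrow> mat_ker M = {0}"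
  unfolding mat_ker_def invertible_left_inverse matrix_left_invertible_ker by auto

lemma sym_pos_def_imp_invertible: "sym_pos_def M \<Longrightarrow> invertible M"
  by (simp add: invertible_iff_mat_ker mat_ker_sym_pos_def)

lemma sym_pos_def_matrix_inv:
  assumes "sym_pos_def M"
  shows "sym_pos_def (matrix_inv M)"
proof -
  have sym: "transpose M = M" and pos: "\<And>x. x \<noteq> 0 \<Longrightarrow> x \<bullet> (M *v x) > 0"
    using assms unfolding sym_pos_def_def by auto
  have inv: "invertible M"
    using assms by (rule sym_pos_def_imp_invertible)
  have "transpose (matrix_inv M) = transpose (matrix_inv M) ** (M ** matrix_inv M)"
    by (simp add: matrix_inv_right inv)
  also have "\<dots> = transpose (M ** matrix_inv M) ** matrix_inv M"
    by (simp add: matrix_mul_assoc matrix_transpose_mul sym)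
  also have "\<dots> = matrix_inv M"
    by (simp add: matrix_inv_right inv)
  finally have "transpose (matrix_inv M) = matrix_inv M" .
  moreover have "x \<bullet> (matrix_inv M *v x) > 0" if "x \<noteq> 0" for x
  proof -
    define y where "y = matrix_inv M *v x"
    have x: "x = M *v y"
      by (simp add: y_def matrix_vector_mul_assoc matrix_inv_right inv)
    with that have "y \<noteq> 0" by auto
    moreover have "x \<bullet> (matrix_inv M *v x) = y \<bullet> (M *v y)"
      by (metis x y_def inner_commute)
    ultimately show ?thesis
      using pos by simp
  qed
  ultimately show ?thesis
    unfolding sym_pos_def_def by blast
qed

lemma quadratic_form_congruence:
  fixes B :: "real^'n^'m"
  shows "x \<bullet> ((transpose B ** Q ** B) *v x) = (B *v x) \<bullet> (Q *v (B *v x))"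
  by (metis matrix_vector_mul_assoc transpose_matrix_vector dot_lmul_matrix inner_commute)

lemma sym_pos_semidef_quadratic_form_zero:
  assumes "sym_pos_semidef M" and "x \<bullet> (M *v x) = 0"
  shows "M *v x = 0"
proof (rule ccontr)
  define y where "y = M *v x"
  define q where "q = y \<bullet> (M *v y)"
  define t where "t = (y \<bullet> y) / (q + 1)"
  have sym: "transpose M = M" and psd: "\<And>z. z \<bullet> (M *v z) \<ge> 0"
    using assms(1) unfolding sym_pos_semidef_def by auto
  assume "M *v x \<noteq> 0"
  then have yy: "y \<bullet> y > 0"
    by (simp add: y_def)
  have q: "q \<ge> 0"
    by (simp add: q_def psd)
  \<comment> \<open>Along \<open>x - t M x\<close> the form equals \<open>t (t q - 2 |M x|\<^sup>2)\<close>, negative for small \<open>t > 0\<close>.\<close>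
  have "x \<bullet> (M *v y) = y \<bullet> y"
    by (metis y_def sym dot_lmul_matrix transpose_matrix_vector inner_commute)
  then have "(x - t *\<^sub>R y) \<bullet> (M *v (x - t *\<^sub>R y)) = t * (t * q - 2 * (y \<bullet> y))"
    using assms(2)
    by (simp add: q_def y_def[symmetric] algebra_simps inner_diff_left inner_diff_right
        inner_commute[of y x])
  moreover have "t * q < y \<bullet> y"
    using yy q by (simp add: t_def field_simps)
  moreover have "t > 0"
    using yy q by (simp add: t_def)
  moreover have "t * q - 2 * (y \<bullet> y) < 0"
    using yy \<open>t * q < y \<bullet> y\<close> by linarith
  ultimately have "(x - t *\<^sub>R y) \<bullet> (M *v (x - t *\<^sub>R y)) < 0"
    by (simp add: mult_pos_neg)
  with psd show False
    by (metis not_le)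
qed

lemma invertible_add_congruence:
  fixes M :: "real^'n^'n" and B :: "real^'n^'m"
  assumes "sym_pos_semidef M" and "sym_pos_def Q" and "\<gamma> > 0"
    and "mat_ker M \<inter> mat_ker B \<subseteq> {0}"
  shows "invertible (M + \<gamma> *\<^sub>R (transpose B ** Q ** B))"
  unfolding invertible_iff_mat_ker
proof (intro equalityI subsetI)
  fix x assume "x \<in> mat_ker (M + \<gamma> *\<^sub>R (transpose B ** Q ** B))"
  then have "x \<bullet> ((M + \<gamma> *\<^sub>R (transpose B ** Q ** B)) *v x) = 0"
    by (simp add: mat_ker_def)
  then have "x \<bullet> (M *v x) + \<gamma> * ((B *v x) \<bullet> (Q *v (B *v x))) = 0"
    by (simp add: quadratic_form_congruence matrix_vector_mult_add_rdistrib
        scaleR_matrix_vector_assoc[symmetric] inner_add_right)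
  moreover have "x \<bullet> (M *v x) \<ge> 0" and "(B *v x) \<bullet> (Q *v (B *v x)) \<ge> 0"
    using assms(1) sym_pos_def_imp_semidef[OF assms(2)] unfolding sym_pos_semidef_def by auto
  ultimately have "x \<bullet> (M *v x) = 0" and "(B *v x) \<bullet> (Q *v (B *v x)) = 0"
    using \<open>\<gamma> > 0\<close> by (simp_all add: add_nonneg_eq_0_iff)
  then have "x \<in> mat_ker M" and "x \<in> mat_ker B"
    using sym_pos_semidef_quadratic_form_zero[OF assms(1)] assms(2)
    unfolding mat_ker_def sym_pos_def_def by force+
  then show "x \<in> {0}"
    using assms(4) by blast
qed (simp add: mat_ker_def)

lemma push_through_identity:
  fixes A :: "real^'n^'n" and C :: "real^'n^'l" and Q :: "real^'l^'l" and \<gamma> :: real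
  defines "K \<equiv> A + \<gamma> *\<^sub>R (transpose C ** Q ** C)"
    and "N \<equiv> mat 1 + \<gamma> *\<^sub>R (C ** matrix_inv A ** transpose C ** Q)"
  assumes invertible: "invertible A" "invertible K" "invertible N"
  shows "\<gamma> *\<^sub>R (C ** matrix_inv K ** transpose C ** Q) = mat 1 - matrix_inv N"
proof -
  have "K ** (matrix_inv A ** (transpose C ** Q)) = transpose C ** (Q ** N)"
    unfolding K_def N_def by (simp add: matrix_ring_simps matrix_inv_simps invertible)
  from arg_cong[OF this, of "\<lambda>X. matrix_inv K ** X ** matrix_inv N"]
  have "matrix_inv A ** (transpose C ** (Q ** matrix_inv N)) = matrix_inv K ** (transpose C ** Q)"
    by (simp add: matrix_ring_simps matrix_inv_simps invertible)
  then have "\<gamma> *\<^sub>R (C ** matrix_inv K ** transpose C ** Q) = (N - mat 1) ** matrix_inv N"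
    unfolding N_def by (simp add: matrix_ring_simps)
  also have "\<dots> = mat 1 - matrix_inv N"
    by (simp add: matrix_ring_simps matrix_inv_simps invertible)
  finally show ?thesis .
qed

lemma augmented_lagrangian_factorization:
  fixes A11 :: "real^'n^'n" and A22 :: "real^'m^'m" and C :: "real^'n^'l" and C2 :: "real^'m^'l"
    and W Shat F :: "real^'l^'l" and \<gamma>1 \<gamma>2 :: real
  defines "A12 \<equiv> - (\<gamma>1 *\<^sub>R (transpose C ** matrix_inv W ** C2))"
    and "A21 \<equiv> - (\<gamma>2 *\<^sub>R (transpose C2 ** matrix_inv W ** C))"
    and "D \<equiv> \<gamma>2 *\<^sub>R (transpose C2 ** matrix_inv W ** (mat 1 - F))"
    and "E \<equiv> C2 ** matrix_inv A22"
    and "G \<equiv> mat 1 - \<gamma>1 *\<^sub>R (C2 ** matrix_inv A22 ** transpose C2 ** matrix_inv W)"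
  assumes invertible: "invertible A11" "invertible A22" "invertible W" "invertible Shat"
    and "\<gamma>1 \<noteq> 0"
    and push_through: "\<gamma>1 *\<^sub>R (C ** matrix_inv A11 ** transpose C ** matrix_inv W) = mat 1 - F"
  shows "block3 (mat 1) 0 0
           (A21 ** matrix_inv A11) (mat 1 - D ** E) (D ** G ** ((1 / \<gamma>1) *\<^sub>R W) ** matrix_inv Shat)
           (C ** matrix_inv A11) (- (F ** E)) ((mat 1 - F ** G) ** ((- 1 / \<gamma>1) *\<^sub>R W) ** matrix_inv Shat)
         ** block3 A11 A12 (transpose C) 0 A22 (- transpose C2) 0 0 Shat
       = block3 A11 A12 (transpose C) A21 A22 (- transpose C2) C (- C2) 0"
proof -
  have push_through_W:
    "C ** (matrix_inv A11 ** (transpose C ** Y)) = (1 / \<gamma>1) *\<^sub>R (W ** Y - F ** (W ** Y))"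
    for Y :: "real^'k^'l"
    using arg_cong[OF push_through, of "\<lambda>X. (1 / \<gamma>1) *\<^sub>R (X ** W ** Y)"] \<open>\<gamma>1 \<noteq> 0\<close>
    by (simp add: matrix_ring_simps matrix_inv_simps invertible)
  have push_through_W1: "C ** (matrix_inv A11 ** transpose C) = (1 / \<gamma>1) *\<^sub>R (W - F ** W)"
    using push_through_W[of "mat 1"] by simp
  show ?thesis
    unfolding block3_mult
    using \<open>\<gamma>1 \<noteq> 0\<close>
    by (simp add: A12_def A21_def D_def E_def G_def matrix_ring_simps matrix_inv_simps invertible
        push_through_W push_through_W1 algebra_simps)
qed

theorem mainTheorem7:
  fixes A :: "real^'n^'n" and A2 :: "real^'m^'m"
    and C :: "real^'n^'l" and C2 :: "real^'m^'l"
    and W :: "real^'l^'l" and Shat :: "real^'l^'l"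
    and \<gamma>1 \<gamma>2 :: real
  assumes A_spd: "sym_pos_def A"
    and A2_spsd: "sym_pos_semidef A2"
    and A2_ker: "mat_ker A2 = span {1 :: real^'m}"
    and C_full: "rank C = CARD('l)"
    and C2_one: "(1 :: real^'m) \<notin> mat_ker C2"
    and W_spd: "sym_pos_def W"
    and g1: "\<gamma>1 > 0" and g2: "\<gamma>2 > 0"
    and S_inv: "invertible Shat"
  shows
   "let A11 = A + \<gamma>1 *\<^sub>R (transpose C ** matrix_inv W ** C);
        A12 = - (\<gamma>1 *\<^sub>R (transpose C ** matrix_inv W ** C2));
        A21 = - (\<gamma>2 *\<^sub>R (transpose C2 ** matrix_inv W ** C));
        A22 = A2 + \<gamma>2 *\<^sub>R (transpose C2 ** matrix_inv W ** C2);
        AA = block3 A11 A12 (transpose C) A21 A22 (- transpose C2) C (- C2) 0;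
        PP = block3 A11 A12 (transpose C) 0 A22 (- transpose C2) 0 0 Shat;
        F = matrix_inv (mat 1 + \<gamma>1 *\<^sub>R (C ** matrix_inv A ** transpose C ** matrix_inv W));
        D = \<gamma>2 *\<^sub>R (transpose C2 ** matrix_inv W ** (mat 1 - F));
        E = C2 ** matrix_inv A22;
        G = mat 1 - \<gamma>1 *\<^sub>R (C2 ** matrix_inv A22 ** transpose C2 ** matrix_inv W)
    in AA ** matrix_inv PP =
       block3 (mat 1) 0 0
              (A21 ** matrix_inv A11) (mat 1 - D ** E) (D ** G ** ((1 / \<gamma>1) *\<^sub>R W) ** matrix_inv Shat)
              (C ** matrix_inv A11) (- (F ** E)) ((mat 1 - F ** G) ** ((- 1 / \<gamma>1) *\<^sub>R W) ** matrix_inv Shat)"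
proof -
  have W: "invertible W" and A: "invertible A"
    using W_spd A_spd by (simp_all add: sym_pos_def_imp_invertible)
  have A11: "invertible (A + \<gamma>1 *\<^sub>R (transpose C ** matrix_inv W ** C))"
    using A_spd W_spd g1
    by (intro invertible_add_congruence)
      (simp_all add: sym_pos_def_imp_semidef sym_pos_def_matrix_inv mat_ker_sym_pos_def)
  have "mat_ker A2 \<inter> mat_ker C2 \<subseteq> {0}"
  proof
    fix x assume x: "x \<in> mat_ker A2 \<inter> mat_ker C2"
    then obtain c where c: "x = c *\<^sub>R 1"
      using A2_ker by (auto simp: span_singleton)
    with x have "c *\<^sub>R (C2 *v 1) = 0"
      by (simp add: mat_ker_def matrix_vector_mult_scaleR)
    with C2_one c show "x \<in> {0}"
      by (simp add: mat_ker_def)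
  qed
  then have A22: "invertible (A2 + \<gamma>2 *\<^sub>R (transpose C2 ** matrix_inv W ** C2))"
    using A2_spsd W_spd g2 by (intro invertible_add_congruence) (simp_all add: sym_pos_def_matrix_inv)
  have "invertible ((W + \<gamma>1 *\<^sub>R (transpose (transpose C) ** matrix_inv A ** transpose C)) ** matrix_inv W)"
    using A_spd W_spd g1
    by (intro invertible_mult invertible_add_congruence)
      (simp_all add: sym_pos_def_imp_semidef sym_pos_def_matrix_inv mat_ker_sym_pos_def
        sym_pos_def_imp_invertible)
  then have N: "invertible (mat 1 + \<gamma>1 *\<^sub>R (C ** matrix_inv A ** transpose C ** matrix_inv W))"
    by (simp add: matrix_ring_simps matrix_inv_right W)
  have "invertible (block3 (A + \<gamma>1 *\<^sub>R (transpose C ** matrix_inv W ** C))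
      (- (\<gamma>1 *\<^sub>R (transpose C ** matrix_inv W ** C2))) (transpose C)
      0 (A2 + \<gamma>2 *\<^sub>R (transpose C2 ** matrix_inv W ** C2)) (- transpose C2) 0 0 Shat)"
    using A11 A22 S_inv by (rule block3_upper_triangular_invertible)
  moreover have "\<gamma>1 \<noteq> 0"
    using g1 by simp
  ultimately show ?thesis
    unfolding Let_def
    by (intro matrix_inv_eqI augmented_lagrangian_factorization A11 A22 W S_inv
        push_through_identity A N)
qed

end
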